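(* Let $n\ge 2$ and let $T_1,\dots,T_{n-1}$ and $D_1,\dots,D_n$ be the Demazure–Lustig operators and the $q$-Dunkl operators described in the context. Then for $1\le i\le n-1$, $$T_i\,D_{i+1}=t\,D_i\,T_i^{-1},\qquad T_i\,D_i=D_{i+1}\,T_i+(t-1)D_i,$$ and for all $1\le i\le n-1$ and $1\le j\le n$ with $j\ne i,i+1$, $T_iD_j=D_jT_i$.
   Context: Let $n\ge1$, let $q,t$ be generic parameters (indeterminates), and let operators act on Laurent polynomials in $x=(x_1,\dots,x_n)$ with coefficients in $\mathbb{Q}(q,t)$; $x_i$ also denotes multiplication by $x_i$. Let $s_i$ ($1\le i\le n-1$) interchange $x_i$ and $x_{i+1}$, and let $\tau_i$ be the $q$-shift $(\tau_if)(x_1,\dots,x_n)=f(x_1,\dots,qx_i,\dots,x_n)$. The Demazure–Lustig operators are $T_i=t+\frac{tx_i-x_{i+1}}{x_i-x_{i+1}}(s_i-1)$, $1\le i\le n-1$; they satisfy $(T_i-t)(T_i+1)=0$, hence are invertible with $T_i^{-1}=t^{-1}-1+t^{-1}T_i$. Let $\omega=s_{n-1}\cdots s_2s_1\tau_1$ (composition of operators), and for $1\le i\le n$ let $Y_i=t^{-n+i}\,T_i\cdots T_{n-1}\,\omega\,T_1^{-1}\cdots T_{i-1}^{-1}$. For $i<j$ let $T_{ij}^{-1}=T_i^{-1}T_{i+1}^{-1}\cdots T_{j-2}^{-1}T_{j-1}^{-1}T_{j-2}^{-1}\cdots T_i^{-1}$. The $q$-Dunkl operators are $$D_i=x_i^{-1}\Bigl(1-t^{n-1}\Bigl[1+(t^{-1}-1)\sum_{j=i+1}^n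 t^{j-i}T_{ij}^{-1}\Bigr]Y_i\Bigr),\qquad 1\le i\le n,$$ so in particular $D_n=x_n^{-1}(1-t^{n-1}Y_n)$. *)

theory Defs
  imports "HOL-Library.Poly_Mapping" "HOL-Computational_Algebra.Polynomial"
    "HOL-Computational_Algebra.Fraction_Field"
begin

text \<open>Coefficient field Q(q,t): fraction field of Q[q][t].  The inner polynomial
  variable is q, the outer one is t; both are algebraically independent indeterminates.\<close>
type_synonym qt = "rat poly poly fract"

definition qq :: qt where "qq = Fract [:[:0, 1:]:] 1"
definition tt :: qt where "tt = Fract [:0, 1:] 1"

text \<open>Laurent polynomials: finitely supported maps from integer exponent vectors
  (variable index \<Rightarrow> exponent, variables indexed 1,2,...) to coefficients.\<close>
type_synonym lp = "(nat \<Rightarrow>\<^sub>0 int) \<Rightarrow>\<^sub>0 qt"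

definition const :: "qt \<Rightarrow> lp" where "const c = Poly_Mapping.single 0 c"

definition xvar :: "nat \<Rightarrow> lp" where
  "xvar i = Poly_Mapping.single (Poly_Mapping.single i 1) 1"

definition xinv :: "nat \<Rightarrow> lp" where
  "xinv i = Poly_Mapping.single (Poly_Mapping.single i (-1)) 1"

definition laurent_in :: "nat \<Rightarrow> lp set" where
  "laurent_in n = {f. \<forall>m \<in> Poly_Mapping.keys f. Poly_Mapping.keys m \<subseteq> {1..n}}"

definition swap_exp :: "nat \<Rightarrow> (nat \<Rightarrow>\<^sub>0 int) \<Rightarrow> (nat \<Rightarrow>\<^sub>0 int)" where
  "swap_exp i m = m - Poly_Mapping.single i (Poly_Mapping.lookup m i) - Poly_Mapping.single (Suc i) (Poly_Mapping.lookup m (Suc i))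
     + Poly_Mapping.single i (Poly_Mapping.lookup m (Suc i)) + Poly_Mapping.single (Suc i) (Poly_Mapping.lookup m i)"

definition s_op :: "nat \<Rightarrow> lp \<Rightarrow> lp" where
  "s_op i f = (\<Sum>m\<in>Poly_Mapping.keys f. Poly_Mapping.single (swap_exp i m) (Poly_Mapping.lookup f m))"

definition tau_op :: "nat \<Rightarrow> lp \<Rightarrow> lp" where
  "tau_op i f = (\<Sum>m\<in>Poly_Mapping.keys f. Poly_Mapping.single m (qq powi (Poly_Mapping.lookup m i) * Poly_Mapping.lookup f m))"

text \<open>Demazure--Lustig operator T_i = t + (t x_i - x_{i+1})/(x_i - x_{i+1}) (s_i - 1);
  the division is exact in the Laurent polynomial ring.\<close>
definition T_op :: "nat \<Rightarrow> lp \<Rightarrow> lp" where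
  "T_op i f = const tt * f +
     (THE g. (xvar i - xvar (Suc i)) * g = (const tt * xvar i - xvar (Suc i)) * (s_op i f - f))"

definition Tinv_op :: "nat \<Rightarrow> lp \<Rightarrow> lp" where
  "Tinv_op i f = const (inverse tt - 1) * f + const (inverse tt) * T_op i f"

text \<open>omega = s_{n-1} ... s_2 s_1 tau_1 (tau_1 applied first).\<close>
definition omega_op :: "nat \<Rightarrow> lp \<Rightarrow> lp" where
  "omega_op n f = fold s_op [1..<n] (tau_op 1 f)"

definition Y_op :: "nat \<Rightarrow> nat \<Rightarrow> lp \<Rightarrow> lp" where
  "Y_op n i f = const (tt powi (int i - int n)) *
      foldr T_op [i..<n] (omega_op n (foldr Tinv_op [1..<i] f))"

definition Tij_inv :: "nat \<Rightarrow> nat \<Rightarrow> lp \<Rightarrow> lp" where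
  "Tij_inv i j f = foldr Tinv_op ([i..<j] @ rev [i..<j - 1]) f"

definition D_op :: "nat \<Rightarrow> nat \<Rightarrow> lp \<Rightarrow> lp" where
  "D_op n i f = xinv i * (f - const (tt ^ (n - 1)) *
      (Y_op n i f + const (inverse tt - 1) *
         (\<Sum>j = i + 1..n. const (tt ^ (j - i)) * Tij_inv i j (Y_op n i f))))"

end

theory Submission
  imports Defs "HOL-Combinatorics.Transposition"
begin

text \<open>
  In the fraction field of the Laurent polynomials the Demazure--Lustig operator reads
  T_i f = c(x_i, x_{i+1}) s_i f + d(x_i, x_{i+1}) f with c(a, b) = (t a - b) / (a - b) and
  d(a, b) = (1 - t) b / (a - b). This turns the quadratic relation and the braid relation into
  identities of rational functions. The defining identity also shows that T_i commutes with
  multiplication by s_i-invariant polynomials, and that a ring map sending x_k, x_{k+1} to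
  x_l, x_{l+1} and intertwining s_k with s_l intertwines T_k with T_l; this gives
  T_i T_j = T_j T_i for |i - j| > 1 and omega T_{k+1} = T_k omega.

  Write D_i = x_i^{-1} (1 - t^{n-1} B_i Y_i), where B_i is the bracket in the definition of D_i.
  The first relation follows from T_i x_{i+1}^{-1} = t x_i^{-1} T_i^{-1},
  Y_i T_i^{-1} = t^{-1} T_i Y_{i+1} and B_i T_i = t T_i^{-1} B_{i+1}; the last holds because
  T_{ij}^{-1} = T_i^{-1} T_{i+1,j}^{-1} T_i^{-1} expresses the sum in B_i through that in B_{i+1}.
  The second relation follows from the first by the quadratic relation. For the third, the braid
  relations carry T_i through the words defining Y_j and T_{jk}^{-1}: when j < i every term of
  the sum in B_j commutes with T_i except those with k = i and k = i + 1, whose weighted sum does.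
\<close>

lemma sum_single_lookup_keys:
  "(\<Sum>m\<in>Poly_Mapping.keys f. Poly_Mapping.single m (Poly_Mapping.lookup f m)) = f"
proof (rule poly_mapping_eqI)
  fix k
  show "Poly_Mapping.lookup
      (\<Sum>m\<in>Poly_Mapping.keys f. Poly_Mapping.single m (Poly_Mapping.lookup f m)) k
      = Poly_Mapping.lookup f k"
    by (cases "k \<in> Poly_Mapping.keys f")
       (simp_all add: lookup_sum lookup_single when_def sum.delta' in_keys_iff)
qed

lemma sum_cong_pair:
  assumes "finite A" "a \<in> A" "b \<in> A" "a \<noteq> b"
    and "\<And>k. k \<in> A \<Longrightarrow> k \<noteq> a \<Longrightarrow> k \<noteq> b \<Longrightarrow> F k = G k" "F a + F b = G a + G b"
  shows "sum F A = (sum G A :: 'a::comm_monoid_add)"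
proof -
  have split: "sum H A = H a + H b + sum H (A - {a} - {b})" for H :: "_ \<Rightarrow> 'a"
    using assms(1-4) by (simp add: sum.remove[of A a] sum.remove[of "A - {a}" b] add.assoc)
  have "sum F (A - {a} - {b}) = sum G (A - {a} - {b})"
    by (rule sum.cong) (auto intro: assms(5))
  then show ?thesis
    by (simp only: split assms(6))
qed

lemma upt_split_pair: "a \<le> b \<Longrightarrow> Suc b < c \<Longrightarrow> [a..<c] = [a..<b] @ b # Suc b # [Suc (Suc b)..<c]"
  by (metis le_Suc_eq less_imp_le_nat upt_add_eq_append upt_conv_Cons le_add_diff_inverse
      Suc_lessD)

lemma diff_dvd_power_diff_of_inverses:
  fixes x y x' y' :: "'a::comm_ring_1"
  assumes "x * x' = 1" "y * y' = 1"
  shows "x - y dvd x' ^ n - y' ^ n"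
proof -
  have "x' - y' = (x - y) * - (x' * y')"
    using assms by (simp add: algebra_simps) (metis mult.assoc mult.commute mult_1_right)
  then have "x - y dvd x' - y'"
    by simp
  also have "x' - y' dvd x' ^ n - y' ^ n"
    by (metis dvd_triv_left power_diff_sumr2)
  finally show ?thesis .
qed

section \<open>Monomial maps and endomorphisms of Laurent polynomials\<close>

definition monomial_map ::
    "('a \<Rightarrow> 'a) \<Rightarrow> ('a \<Rightarrow> 'b) \<Rightarrow> ('a \<Rightarrow>\<^sub>0 'b) \<Rightarrow> 'a \<Rightarrow>\<^sub>0 'b::comm_ring_1" where
  "monomial_map \<sigma> w f =
     (\<Sum>m\<in>Poly_Mapping.keys f. Poly_Mapping.single (\<sigma> m) (w m * Poly_Mapping.lookup f m))"

lemma monomial_map_superset: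
  assumes "finite A" "Poly_Mapping.keys f \<subseteq> A"
  shows "monomial_map \<sigma> w f = (\<Sum>m\<in>A. Poly_Mapping.single (\<sigma> m) (w m * Poly_Mapping.lookup f m))"
  unfolding monomial_map_def
  by (rule sum.mono_neutral_left) (use assms in \<open>auto simp: not_in_keys_iff_lookup_eq_zero\<close>)

lemma monomial_map_add: "monomial_map \<sigma> w (f + g) = monomial_map \<sigma> w f + monomial_map \<sigma> w g"
proof -
  let ?A = "Poly_Mapping.keys f \<union> Poly_Mapping.keys g"
  have "monomial_map \<sigma> w (f + g)
      = (\<Sum>m\<in>?A. Poly_Mapping.single (\<sigma> m) (w m * Poly_Mapping.lookup (f + g) m))"
    using keys_add[of f g] by (intro monomial_map_superset) auto
  also have "\<dots> = (\<Sum>m\<in>?A. Poly_Mapping.single (\<sigma> m) (w m * Poly_Mapping.lookup f m))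
       + (\<Sum>m\<in>?A. Poly_Mapping.single (\<sigma> m) (w m * Poly_Mapping.lookup g m))"
    by (simp add: lookup_add distrib_left single_add sum.distrib)
  finally show ?thesis
    by (simp add: monomial_map_superset[symmetric])
qed

lemma monomial_map_single:
  "monomial_map \<sigma> w (Poly_Mapping.single m c) = Poly_Mapping.single (\<sigma> m) (w m * c)"
  by (simp add: monomial_map_def)

lemma monomial_map_sum: "monomial_map \<sigma> w (sum F A) = (\<Sum>a\<in>A. monomial_map \<sigma> w (F a))"
  by (induction A rule: infinite_finite_induct)
    (simp_all add: monomial_map_add monomial_map_def[of _ _ 0])

lemma monomial_map_mult:
  fixes f g :: "'a::comm_monoid_add \<Rightarrow>\<^sub>0 'b::comm_ring_1"
  assumes "\<And>a b. \<sigma> (a + b) = \<sigma> a + \<sigma> b" and "\<And>a b. w (a + b) = w a * w b"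
  shows "monomial_map \<sigma> w (f * g) = monomial_map \<sigma> w f * monomial_map \<sigma> w g"
proof -
  let ?F = "Poly_Mapping.keys f" and ?G = "Poly_Mapping.keys g"
  let ?f = "Poly_Mapping.lookup f" and ?g = "Poly_Mapping.lookup g"
  have "f * g = (\<Sum>a\<in>?F. Poly_Mapping.single a (?f a)) * (\<Sum>b\<in>?G. Poly_Mapping.single b (?g b))"
    by (simp add: sum_single_lookup_keys)
  also have "\<dots> = (\<Sum>a\<in>?F. \<Sum>b\<in>?G. Poly_Mapping.single (a + b) (?f a * ?g b))"
    by (simp add: sum_product mult_single)
  finally have "monomial_map \<sigma> w (f * g)
      = (\<Sum>a\<in>?F. \<Sum>b\<in>?G. Poly_Mapping.single (\<sigma> a + \<sigma> b) (w a * w b * (?f a * ?g b)))"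
    by (simp add: monomial_map_sum monomial_map_single assms)
  also have "\<dots> = (\<Sum>a\<in>?F. Poly_Mapping.single (\<sigma> a) (w a * ?f a))
      * (\<Sum>b\<in>?G. Poly_Mapping.single (\<sigma> b) (w b * ?g b))"
    by (simp add: sum_product mult_single mult_ac)
  finally show ?thesis
    by (simp add: monomial_map_def)
qed

lemma lookup_monomial_map_involution:
  assumes "\<And>m. \<sigma> (\<sigma> m) = m"
  shows "Poly_Mapping.lookup (monomial_map \<sigma> w f) m = w (\<sigma> m) * Poly_Mapping.lookup f (\<sigma> m)"
proof -
  have "Poly_Mapping.lookup (monomial_map \<sigma> w f) m
      = (\<Sum>k\<in>Poly_Mapping.keys f. if k = \<sigma> m then w k * Poly_Mapping.lookup f k else 0)"
    unfolding monomial_map_def lookup_sum lookup_single when_def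
    by (rule sum.cong) (auto simp: assms dest: arg_cong[of _ _ \<sigma>])
  then show ?thesis
    by (simp add: not_in_keys_iff_lookup_eq_zero)
qed

lemma const_add: "const (a + b) = const a + const b"
  by (simp add: const_def single_add)

lemma const_mult: "const (a * b) = const a * const b"
  by (simp add: const_def mult_single)

lemma const_diff: "const (a - b) = const a - const b"
  by (simp add: const_def single_diff)

lemma const_0 [simp]: "const 0 = 0"
  by (simp add: const_def)

lemma const_1 [simp]: "const 1 = 1"
  by (simp add: const_def)

lemma const_mult_assoc: "const a * (const b * f) = const (a * b) * f"
  by (simp add: const_mult mult.assoc)

locale lp_linear =
  fixes \<phi> :: "lp \<Rightarrow> lp"
  assumes map_add: "\<phi> (f + g) = \<phi> f + \<phi> g"
    and map_const_mult: "\<phi> (const c * f) = const c * \<phi> f"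
begin

lemma map_zero: "\<phi> 0 = 0"
  using map_add[of 0 0] by simp

lemma map_uminus: "\<phi> (- f) = - \<phi> f"
  using map_add[of f "- f"] by (simp add: map_zero add.inverse_unique)

lemma map_diff: "\<phi> (f - g) = \<phi> f - \<phi> g"
  using map_add[of f "- g"] by (simp add: map_uminus)

lemma map_sum: "\<phi> (sum F A) = (\<Sum>a\<in>A. \<phi> (F a))"
  by (induction A rule: infinite_finite_induct) (simp_all add: map_zero map_add)

end

lemma lp_linear_id: "lp_linear id"
  by (simp add: lp_linear_def)

lemma lp_linear_comp: "lp_linear \<phi> \<Longrightarrow> lp_linear \<psi> \<Longrightarrow> lp_linear (\<lambda>f. \<phi> (\<psi> f))"
  by (simp add: lp_linear_def)

lemma lp_linear_foldr: "(\<And>i. lp_linear (F i)) \<Longrightarrow> lp_linear (foldr F xs)"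
  by (induction xs) (auto simp: lp_linear_id comp_def intro: lp_linear_comp)

locale lp_endo = lp_linear +
  assumes map_mult: "\<phi> (f * g) = \<phi> f * \<phi> g"
    and map_const: "\<phi> (const c) = const c"

lemma (in lp_endo) map_1: "\<phi> 1 = 1"
  using map_const[of 1] by simp

lemma lp_endoI:
  assumes "\<And>f g. \<phi> (f + g) = \<phi> f + \<phi> g" "\<And>f g. \<phi> (f * g) = \<phi> f * \<phi> g"
    "\<And>c. \<phi> (const c) = const c"
  shows "lp_endo \<phi>"
  by unfold_locales (simp_all add: assms)

lemma lp_endo_id: "lp_endo id"
  by (rule lp_endoI) simp_all

lemma lp_endo_comp:
  assumes "lp_endo \<phi>" "lp_endo \<psi>"
  shows "lp_endo (\<lambda>f. \<phi> (\<psi> f))"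
proof -
  interpret \<phi>: lp_endo \<phi> by fact
  interpret \<psi>: lp_endo \<psi> by fact
  show ?thesis
    by (rule lp_endoI)
      (simp_all add: \<phi>.map_add \<psi>.map_add \<phi>.map_mult \<psi>.map_mult \<phi>.map_const \<psi>.map_const)
qed

lemma lp_endo_fold: "(\<And>i. lp_endo (F i)) \<Longrightarrow> lp_endo (fold F xs)"
  by (induction xs) (auto simp: lp_endo_id comp_def intro: lp_endo_comp)

lemma lp_endo_monomial_map:
  assumes "\<And>a b. \<sigma> (a + b) = \<sigma> a + \<sigma> b" "\<And>a b. w (a + b) = w a * w b" "w 0 = 1"
  shows "lp_endo (monomial_map \<sigma> w)"
proof (rule lp_endoI)
  have "\<sigma> 0 = 0"
    using assms(1)[of 0 0] by simp
  then show "monomial_map \<sigma> w (const c) = const c" for c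
    by (simp add: const_def monomial_map_single assms(3))
qed (simp_all add: monomial_map_add monomial_map_mult assms)

section \<open>The operators s_i and tau_i\<close>

lemma lookup_swap_exp:
  "Poly_Mapping.lookup (swap_exp i m) j = Poly_Mapping.lookup m (transpose i (Suc i) j)"
  by (simp add: swap_exp_def lookup_add lookup_minus lookup_single when_def transpose_def)

lemma swap_exp_add: "swap_exp i (a + b) = swap_exp i a + swap_exp i b"
  by (rule poly_mapping_eqI) (simp add: lookup_swap_exp lookup_add)

lemma swap_exp_swap_exp [simp]: "swap_exp i (swap_exp i m) = m"
  by (rule poly_mapping_eqI) (simp add: lookup_swap_exp)

lemma swap_exp_single:
  "swap_exp i (Poly_Mapping.single j c) = Poly_Mapping.single (transpose i (Suc i) j) c"
  by (rule poly_mapping_eqI) (auto simp: lookup_swap_exp lookup_single when_def transpose_eq_iff)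

lemma s_op_monomial_map: "s_op i = monomial_map (swap_exp i) (\<lambda>_. 1)"
  by (simp add: fun_eq_iff s_op_def monomial_map_def)

lemma lp_endo_s_op: "lp_endo (s_op i)"
  unfolding s_op_monomial_map by (rule lp_endo_monomial_map) (simp_all add: swap_exp_add)

interpretation s_op: lp_endo "s_op i" for i
  by (fact lp_endo_s_op)

lemma lookup_s_op: "Poly_Mapping.lookup (s_op i f) m = Poly_Mapping.lookup f (swap_exp i m)"
  by (simp add: s_op_monomial_map lookup_monomial_map_involution)

lemma s_op_s_op [simp]: "s_op i (s_op i f) = f"
  by (rule poly_mapping_eqI) (simp add: lookup_s_op)

lemma s_op_xvar: "s_op i (xvar j) = xvar (transpose i (Suc i) j)"
  by (simp add: xvar_def s_op_monomial_map monomial_map_single swap_exp_single)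

lemma s_op_xinv: "s_op i (xinv j) = xinv (transpose i (Suc i) j)"
  by (simp add: xinv_def s_op_monomial_map monomial_map_single swap_exp_single)

lemma tau_op_monomial_map: "tau_op k = monomial_map (\<lambda>m. m) (\<lambda>m. qq powi Poly_Mapping.lookup m k)"
  by (simp add: fun_eq_iff tau_op_def monomial_map_def)

lemma qq_nonzero: "qq \<noteq> 0"
  by (simp add: qq_def Zero_fract_def eq_fract)

lemma tt_nonzero: "tt \<noteq> 0"
  by (simp add: tt_def Zero_fract_def eq_fract)

lemma lp_endo_tau_op: "lp_endo (tau_op k)"
  unfolding tau_op_monomial_map
  by (rule lp_endo_monomial_map) (simp_all add: lookup_add power_int_add qq_nonzero)

lemma lookup_tau_op:
  "Poly_Mapping.lookup (tau_op k f) m = qq powi Poly_Mapping.lookup m k * Poly_Mapping.lookup f m"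
  by (simp add: tau_op_monomial_map lookup_monomial_map_involution)

lemma tau_op_xvar: "j \<noteq> k \<Longrightarrow> tau_op k (xvar j) = xvar j"
  by (simp add: xvar_def tau_op_monomial_map monomial_map_single lookup_single)

lemma xvar_xinv: "xvar i * xinv i = 1"
  by (simp add: xvar_def xinv_def mult_single flip: single_add)

lemma xvar_eq_iff: "xvar i = xvar j \<longleftrightarrow> i = j"
  by (metis lookup_single_eq xvar_def one_neq_zero lookup_single_not_eq)

section \<open>The Demazure--Lustig operators\<close>

definition xpow :: "nat \<Rightarrow> int \<Rightarrow> lp" where
  "xpow i k = Poly_Mapping.single (Poly_Mapping.single i k) 1"

lemma xpow_add: "xpow i (a + b) = xpow i a * xpow i b"
  by (simp add: xpow_def mult_single single_add)

lemma xpow_1: "xpow i 1 = xvar i"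
  by (simp add: xpow_def xvar_def)

lemma xpow_minus_1: "xpow i (- 1) = xinv i"
  by (simp add: xpow_def xinv_def)

lemma xpow_of_nat: "xpow i (int n) = xvar i ^ n"
proof (induction n)
  case (Suc n)
  have "xpow i (int (Suc n)) = xpow i 1 * xpow i (int n)"
    by (simp flip: xpow_add)
  then show ?case
    by (simp add: Suc.IH xpow_1)
qed (simp add: xpow_def)

lemma xpow_uminus_of_nat: "xpow i (- int n) = xinv i ^ n"
proof (induction n)
  case (Suc n)
  have "xpow i (- int (Suc n)) = xpow i (- 1) * xpow i (- int n)"
    by (simp flip: xpow_add)
  then show ?case
    by (simp add: Suc.IH xpow_minus_1)
qed (simp add: xpow_def)

definition T_den :: "nat \<Rightarrow> lp" where "T_den i = xvar i - xvar (Suc i)"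
definition T_num :: "nat \<Rightarrow> lp" where "T_num i = const tt * xvar i - xvar (Suc i)"
definition T_rest :: "nat \<Rightarrow> lp" where "T_rest i = const (1 - tt) * xvar (Suc i)"

lemma T_den_nonzero: "T_den i \<noteq> 0"
  by (simp add: T_den_def xvar_eq_iff)

lemma T_den_dvd_xpow_diff: "T_den i dvd xpow i k - xpow (Suc i) k"
proof (cases "k \<ge> 0")
  case True
  then obtain n where "k = int n"
    by (intro that[of "nat k"]) simp
  then show ?thesis
    by (simp add: T_den_def xpow_of_nat power_diff_sumr2)
next
  case False
  then obtain n where "k = - int n"
    by (intro that[of "nat (- k)"]) simp
  then show ?thesis
    by (simp add: T_den_def xpow_uminus_of_nat diff_dvd_power_diff_of_inverses xvar_xinv)
qed

lemma T_den_dvd_s_op_single_diff: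
  "T_den i dvd s_op i (Poly_Mapping.single m c) - Poly_Mapping.single m c"
proof -
  define a where "a = Poly_Mapping.lookup m i"
  define b where "b = Poly_Mapping.lookup m (Suc i)"
  define m0 where "m0 = m - Poly_Mapping.single i a - Poly_Mapping.single (Suc i) b"
  have m: "m = m0 + Poly_Mapping.single i a + Poly_Mapping.single (Suc i) b"
    by (simp add: m0_def)
  have swap_m: "swap_exp i m = m0 + Poly_Mapping.single i b + Poly_Mapping.single (Suc i) a"
    by (rule poly_mapping_eqI)
       (simp add: m0_def a_def b_def lookup_swap_exp lookup_add lookup_minus lookup_single when_def
         transpose_def)
  have "s_op i (Poly_Mapping.single m c) - Poly_Mapping.single m c
      = Poly_Mapping.single m0 c * (xpow i b * xpow (Suc i) a - xpow i a * xpow (Suc i) b)"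
    by (subst (2) m)
       (simp add: s_op_monomial_map monomial_map_single swap_m xpow_def mult_single algebra_simps)
  also have "\<dots> = Poly_Mapping.single m0 c * (xpow i a * xpow (Suc i) a)
      * (xpow i (b - a) - xpow (Suc i) (b - a))"
    by (simp add: algebra_simps flip: xpow_add)
  finally show ?thesis
    by (simp add: T_den_dvd_xpow_diff)
qed

lemma T_den_dvd_s_op_diff: "T_den i dvd s_op i f - f"
proof -
  let ?f = "\<lambda>m. Poly_Mapping.single m (Poly_Mapping.lookup f m)"
  have "s_op i f - f = (\<Sum>m\<in>Poly_Mapping.keys f. s_op i (?f m) - ?f m)"
    by (subst (1 2) sum_single_lookup_keys[symmetric]) (simp add: s_op.map_sum sum_subtractf)
  also have "T_den i dvd \<dots>"
    by (intro dvd_sum T_den_dvd_s_op_single_diff)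
  finally show ?thesis .
qed

lemma T_op_char: "T_den i * T_op i f = T_num i * s_op i f + T_rest i * f"
proof -
  obtain g where g: "s_op i f - f = T_den i * g"
    using T_den_dvd_s_op_diff by (metis dvdE)
  have "(THE h. T_den i * h = T_num i * (s_op i f - f)) = T_num i * g"
    using T_den_nonzero[of i] by (intro the_equality) (auto simp: g algebra_simps)
  then have "T_op i f = const tt * f + T_num i * g"
    by (simp add: T_op_def g flip: T_den_def T_num_def)
  then have "T_den i * T_op i f = const tt * T_den i * f + T_num i * (s_op i f - f)"
    by (simp add: g algebra_simps)
  then show ?thesis
    by (simp add: T_den_def T_num_def T_rest_def const_diff algebra_simps)
qed

lemma T_op_unique: "T_den i * h = T_num i * s_op i f + T_rest i * f \<Longrightarrow> T_op i f = h"
  using T_op_char[of i f] T_den_nonzero[of i] by (metis mult_left_cancel)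

lemma T_op_symmetric_mult: "s_op i p = p \<Longrightarrow> T_op i (p * f) = p * T_op i f"
  by (rule T_op_unique) (simp add: T_op_char s_op.map_mult algebra_simps)

interpretation T_op: lp_linear "T_op i" for i
proof
  show "T_op i (f + g) = T_op i f + T_op i g" for f g
    by (rule T_op_unique) (simp add: T_op_char s_op.map_add algebra_simps)
  show "T_op i (const c * f) = const c * T_op i f" for c f
    by (simp add: T_op_symmetric_mult s_op.map_const)
qed

lemma (in lp_endo) T_op_transport:
  assumes "\<phi> (xvar k) = xvar k'" "\<phi> (xvar (Suc k)) = xvar (Suc k')"
    and "\<And>g. \<phi> (s_op k g) = s_op k' (\<phi> g)"
  shows "\<phi> (T_op k f) = T_op k' (\<phi> f)"
proof -
  have "\<phi> (T_den k) = T_den k'" "\<phi> (T_num k) = T_num k'" "\<phi> (T_rest k) = T_rest k'"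
    using assms by (simp_all add: T_den_def T_num_def T_rest_def map_diff map_mult map_const)
  then have "T_den k' * \<phi> (T_op k f) = T_num k' * s_op k' (\<phi> f) + T_rest k' * \<phi> f"
    using arg_cong[OF T_op_char[of k f], of \<phi>] by (simp add: map_add map_mult assms(3))
  then show ?thesis
    by (rule T_op_unique[symmetric])
qed

section \<open>Hecke relations\<close>

definition fract_of :: "'a::idom \<Rightarrow> 'a fract" where "fract_of a = Fract a 1"

lemma fract_of_add: "fract_of (a + b) = fract_of a + fract_of b"
  and fract_of_diff: "fract_of (a - b) = fract_of a - fract_of b"
  and fract_of_mult: "fract_of (a * b) = fract_of a * fract_of b"
  and fract_of_1: "fract_of 1 = 1"
  and fract_of_eq_iff: "fract_of a = fract_of b \<longleftrightarrow> a = b"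
  by (simp_all add: fract_of_def One_fract_def eq_fract)

definition dl_c :: "'a::field \<Rightarrow> 'a \<Rightarrow> 'a \<Rightarrow> 'a" where "dl_c T a b = (T * a - b) / (a - b)"
definition dl_d :: "'a::field \<Rightarrow> 'a \<Rightarrow> 'a \<Rightarrow> 'a" where "dl_d T a b = (1 - T) * b / (a - b)"

lemma (in lp_endo) fract_of_T_op:
  assumes "\<phi> (xvar k) \<noteq> \<phi> (xvar (Suc k))"
  shows "fract_of (\<phi> (T_op k f))
    = dl_c (fract_of (const tt)) (fract_of (\<phi> (xvar k))) (fract_of (\<phi> (xvar (Suc k))))
        * fract_of (\<phi> (s_op k f))
      + dl_d (fract_of (const tt)) (fract_of (\<phi> (xvar k))) (fract_of (\<phi> (xvar (Suc k))))
        * fract_of (\<phi> f)"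
proof -
  define a where "a = fract_of (\<phi> (xvar k))"
  define b where "b = fract_of (\<phi> (xvar (Suc k)))"
  define T where "T = fract_of (const tt)"
  have "(a - b) * fract_of (\<phi> (T_op k f))
      = (T * a - b) * fract_of (\<phi> (s_op k f)) + (1 - T) * b * fract_of (\<phi> f)"
    using arg_cong[OF T_op_char[of k f], of "\<lambda>g. fract_of (\<phi> g)"]
    by (simp add: a_def b_def T_def T_den_def T_num_def T_rest_def map_add map_diff map_mult
        map_const map_1 const_diff fract_of_add fract_of_diff fract_of_mult fract_of_1)
  moreover have "a - b \<noteq> 0"
    using assms by (simp add: a_def b_def fract_of_eq_iff)
  ultimately show ?thesis
    by (simp flip: a_def b_def T_def add: dl_c_def dl_d_def times_divide_eq_left
        flip: add_divide_distrib add: nonzero_eq_divide_eq mult.commute)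
qed

interpretation id_op: lp_endo "\<lambda>f. f"
  by (rule lp_endoI) simp_all

interpretation s_op_s_op: lp_endo "\<lambda>f. s_op i (s_op j f)" for i j
  by (rule lp_endo_comp) (rule lp_endo_s_op)+

lemma T_op_T_op: "T_op i (T_op i f) = const (tt - 1) * T_op i f + const tt * f"
proof -
  have "fract_of (xvar i) \<noteq> fract_of (xvar (Suc i))"
    by (simp add: fract_of_eq_iff xvar_eq_iff)
  then have "fract_of (T_op i (T_op i f)) = fract_of (const (tt - 1) * T_op i f + const tt * f)"
    by (simp add: id_op.fract_of_T_op s_op.fract_of_T_op xvar_eq_iff s_op_xvar const_diff
        fract_of_add fract_of_mult fract_of_diff fract_of_1,
        simp add: dl_c_def dl_d_def divide_simps, simp add: algebra_simps)
  then show ?thesis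
    by (simp add: fract_of_eq_iff)
qed

definition far :: "nat \<Rightarrow> nat \<Rightarrow> bool" where "far i j \<longleftrightarrow> Suc i < j \<or> Suc j < i"

lemma far_sym: "far i j \<Longrightarrow> far j i"
  by (auto simp: far_def)

lemma s_op_s_op_far:
  assumes "far i j"
  shows "s_op i (s_op j f) = s_op j (s_op i f)"
proof (rule poly_mapping_eqI)
  fix m
  have "swap_exp j (swap_exp i m) = swap_exp i (swap_exp j m)"
    by (rule poly_mapping_eqI) (use assms in \<open>auto simp: lookup_swap_exp transpose_def far_def\<close>)
  then show "Poly_Mapping.lookup (s_op i (s_op j f)) m = Poly_Mapping.lookup (s_op j (s_op i f)) m"
    by (simp add: lookup_s_op)
qed

lemma s_op_braid: "s_op i (s_op (Suc i) (s_op i f)) = s_op (Suc i) (s_op i (s_op (Suc i) f))"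
proof (rule poly_mapping_eqI)
  fix m
  have "swap_exp i (swap_exp (Suc i) (swap_exp i m))
      = swap_exp (Suc i) (swap_exp i (swap_exp (Suc i) m))"
    by (rule poly_mapping_eqI) (auto simp: lookup_swap_exp transpose_def)
  then show "Poly_Mapping.lookup (s_op i (s_op (Suc i) (s_op i f))) m
      = Poly_Mapping.lookup (s_op (Suc i) (s_op i (s_op (Suc i) f))) m"
    by (simp add: lookup_s_op)
qed

lemma s_op_T_op_far: "far i j \<Longrightarrow> s_op j (T_op i f) = T_op i (s_op j f)"
  by (rule s_op.T_op_transport) (auto simp: s_op_xvar far_def s_op_s_op_far)

lemma T_op_T_op_far:
  assumes "far i j"
  shows "T_op i (T_op j f) = T_op j (T_op i f)"
proof (rule T_op_unique)
  have symmetric: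
    "s_op j (T_den i) = T_den i" "s_op j (T_num i) = T_num i" "s_op j (T_rest i) = T_rest i"
    using assms by (auto simp: far_def T_den_def T_num_def T_rest_def s_op.map_diff s_op.map_mult
        s_op.map_const s_op_xvar)
  have "T_den i * T_op j (T_op i f) = T_op j (T_den i * T_op i f)"
    by (simp add: T_op_symmetric_mult symmetric)
  also have "\<dots> = T_num i * T_op j (s_op i f) + T_rest i * T_op j f"
    by (simp add: T_op_char T_op.map_add T_op_symmetric_mult symmetric)
  also have "\<dots> = T_num i * s_op i (T_op j f) + T_rest i * T_op j f"
    using s_op_T_op_far[OF far_sym[OF assms], of f] by simp
  finally show "T_den i * T_op j (T_op i f) = T_num i * s_op i (T_op j f) + T_rest i * T_op j f" .
qed

text \<open>
  With X, Y, Z standing for x_i, x_{i+1}, x_{i+2}, and G_abc for f with these three variables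
  replaced by the ones in positions a, b, c, the two sides are T_i T_{i+1} T_i f and
  T_{i+1} T_i T_{i+1} f expanded by means of c and d. The coefficients of G321, G231 and G312
  agree term by term; those of G123, G213 and G132 agree by the three hypotheses.
\<close>

lemma braid_expansion:
  fixes c d :: "'a \<Rightarrow> 'a \<Rightarrow> 'b::comm_ring"
  assumes "c X Y * c Y X * d X Z + d X Y * d X Y * d Y Z
      = c Y Z * c Z Y * d X Z + d X Y * d Y Z * d Y Z"
    and "d X Z * d Y X + d X Y * d Y Z = d Y Z * d X Z"
    and "d X Y * d X Z = d X Z * d Z Y + d Y Z * d X Y"
  shows "c X Y * (c X Z * (c Y Z * G321 + d Y Z * G231) + d X Z * (c Y X * G123 + d Y X * G213))
       + d X Y * (c Y Z * (c X Z * G312 + d X Z * G132) + d Y Z * (c X Y * G213 + d X Y * G123))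
     = c Y Z * (c X Z * (c X Y * G321 + d X Y * G312) + d X Z * (c Z Y * G123 + d Z Y * G132))
       + d Y Z * (c X Y * (c X Z * G231 + d X Z * G213) + d X Y * (c Y Z * G132 + d Y Z * G123))"
    (is "?L = ?R")
proof -
  have "?L - ?R = G123 * (c X Y * c Y X * d X Z + d X Y * d X Y * d Y Z
         - (c Y Z * c Z Y * d X Z + d X Y * d Y Z * d Y Z))
       + G213 * c X Y * (d X Z * d Y X + d X Y * d Y Z - d Y Z * d X Z)
       + G132 * c Y Z * (d X Y * d X Z - (d X Z * d Z Y + d Y Z * d X Y))"
    by (simp add: algebra_simps)
  then show ?thesis
    by (simp add: assms)
qed

lemma dl_braid_coefficients:
  fixes X Y Z T :: "'a::field"
  assumes "X \<noteq> Y" "Y \<noteq> Z" "X \<noteq> Z"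
  shows "dl_c T X Y * dl_c T Y X * dl_d T X Z + dl_d T X Y * dl_d T X Y * dl_d T Y Z
      = dl_c T Y Z * dl_c T Z Y * dl_d T X Z + dl_d T X Y * dl_d T Y Z * dl_d T Y Z"
    and "dl_d T X Z * dl_d T Y X + dl_d T X Y * dl_d T Y Z = dl_d T Y Z * dl_d T X Z"
    and "dl_d T X Y * dl_d T X Z = dl_d T X Z * dl_d T Z Y + dl_d T Y Z * dl_d T X Y"
  using assms by (simp_all add: dl_c_def dl_d_def divide_simps) (simp_all add: algebra_simps)

lemma T_op_braid: "T_op i (T_op (Suc i) (T_op i f)) = T_op (Suc i) (T_op i (T_op (Suc i) f))"
proof -
  have distinct: "fract_of (xvar i) \<noteq> fract_of (xvar (Suc i))"
    "fract_of (xvar (Suc i)) \<noteq> fract_of (xvar (Suc (Suc i)))"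
    "fract_of (xvar i) \<noteq> fract_of (xvar (Suc (Suc i)))"
    by (simp_all add: fract_of_eq_iff xvar_eq_iff)
  have "fract_of (T_op i (T_op (Suc i) (T_op i f)))
      = fract_of (T_op (Suc i) (T_op i (T_op (Suc i) f)))"
    by (simp add: id_op.fract_of_T_op s_op.fract_of_T_op s_op_s_op.fract_of_T_op s_op_xvar
        xvar_eq_iff s_op_braid)
      (intro braid_expansion dl_braid_coefficients distinct)
  then show ?thesis
    by (simp add: fract_of_eq_iff)
qed

lemma Tinv_op_T_op_combination:
  "const (inverse tt - 1) * T_op i f
    + const (inverse tt) * (const (tt - 1) * T_op i f + const tt * f) = f"
    (is "?lhs = f")
proof -
  have "?lhs = const (inverse tt - 1 + inverse tt * (tt - 1)) * T_op i f
      + const (inverse tt * tt) * f"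
    by (simp add: distrib_left const_mult_assoc const_add distrib_right add.assoc)
  moreover have "inverse tt - 1 + inverse tt * (tt - 1) = 0" "inverse tt * tt = 1"
    using tt_nonzero by (simp_all add: field_simps)
  ultimately show ?thesis
    by simp
qed

lemma T_op_Tinv_op [simp]: "T_op i (Tinv_op i f) = f"
  using Tinv_op_T_op_combination[of i f]
  by (simp add: Tinv_op_def T_op.map_add T_op.map_const_mult T_op_T_op)

lemma Tinv_op_T_op [simp]: "Tinv_op i (T_op i f) = f"
  using Tinv_op_T_op_combination[of i f] by (simp add: Tinv_op_def T_op_T_op)

interpretation Tinv_op: lp_linear "Tinv_op i" for i
proof
  show "Tinv_op i (f + g) = Tinv_op i f + Tinv_op i g" for f g
    by (simp add: Tinv_op_def T_op.map_add algebra_simps)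
  show "Tinv_op i (const c * f) = const c * Tinv_op i f" for c f
    by (simp add: Tinv_op_def T_op.map_const_mult distrib_left mult.left_commute)
qed

lemma tt_Tinv_op: "const tt * Tinv_op i f = const (1 - tt) * f + T_op i f"
proof -
  have "tt * (inverse tt - 1) = 1 - tt" "tt * inverse tt = 1"
    using tt_nonzero by (simp_all add: field_simps)
  then show ?thesis
    by (simp add: Tinv_op_def const_mult_assoc distrib_left)
qed

lemma T_op_xinv_Suc: "T_op i (xinv (Suc i) * g) = const tt * (xinv i * Tinv_op i g)"
proof (rule T_op_unique, rule mult_left_cancel[of "xvar i", THEN iffD1])
  show "xvar i \<noteq> 0"
    by (metis xvar_xinv mult_zero_left zero_neq_one)
  have "const tt * Tinv_op i g = (1 - const tt) * g + T_op i g"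
    by (simp add: tt_Tinv_op const_diff)
  then show "xvar i * (T_den i * (const tt * (xinv i * Tinv_op i g)))
      = xvar i * (T_num i * s_op i (xinv (Suc i) * g) + T_rest i * (xinv (Suc i) * g))"
    using xvar_xinv[of i] xvar_xinv[of "Suc i"] T_op_char[of i g]
    unfolding T_den_def T_num_def T_rest_def const_diff
    by (simp add: s_op.map_mult s_op_xinv) algebra
qed

lemma T_op_xinv_other: "j \<noteq> i \<Longrightarrow> j \<noteq> Suc i \<Longrightarrow> T_op i (xinv j * g) = xinv j * T_op i g"
  by (rule T_op_symmetric_mult) (simp add: s_op_xinv)

lemma T_op_Tinv_op_far: "far i j \<Longrightarrow> T_op i (Tinv_op j f) = Tinv_op j (T_op i f)"
  using T_op_T_op_far[of i j f] by (simp add: Tinv_op_def T_op.map_add T_op.map_const_mult)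

lemma T_op_foldr_T_op_far:
  "(\<forall>k\<in>set ks. far i k) \<Longrightarrow> T_op i (foldr T_op ks g) = foldr T_op ks (T_op i g)"
  by (induction ks arbitrary: g) (simp_all add: T_op_T_op_far)

lemma T_op_foldr_Tinv_op_far:
  "(\<forall>k\<in>set ks. far i k) \<Longrightarrow> T_op i (foldr Tinv_op ks g) = foldr Tinv_op ks (T_op i g)"
  by (induction ks arbitrary: g) (simp_all add: T_op_Tinv_op_far)

lemma T_op_Suc_Tinv_op_Tinv_op_Suc:
  "T_op (Suc a) (Tinv_op a (Tinv_op (Suc a) g)) = Tinv_op a (Tinv_op (Suc a) (T_op a g))"
  by (metis T_op_braid T_op_Tinv_op Tinv_op_T_op)

lemma T_op_Tinv_op_Suc_Tinv_op:
  "T_op a (Tinv_op (Suc a) (Tinv_op a g)) = Tinv_op (Suc a) (Tinv_op a (T_op (Suc a) g))"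
  by (metis T_op_braid T_op_Tinv_op Tinv_op_T_op)

lemma Tinv_op_braid:
  "Tinv_op a (Tinv_op (Suc a) (Tinv_op a g)) = Tinv_op (Suc a) (Tinv_op a (Tinv_op (Suc a) g))"
  by (metis T_op_braid T_op_Tinv_op Tinv_op_T_op)

section \<open>The operator omega\<close>

lemma lookup_foldr_swap_exp:
  "Poly_Mapping.lookup (foldr swap_exp ks m) j
    = Poly_Mapping.lookup m (fold (\<lambda>k. transpose k (Suc k)) ks j)"
  by (induction ks arbitrary: j) (simp_all add: lookup_swap_exp)

lemma lookup_fold_s_op:
  "Poly_Mapping.lookup (fold s_op ks f) m = Poly_Mapping.lookup f (foldr swap_exp ks m)"
  by (induction ks arbitrary: f) (simp_all add: lookup_s_op)

lemma fold_s_op_xvar: "fold s_op ks (xvar j) = xvar (fold (\<lambda>k. transpose k (Suc k)) ks j)"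
  by (induction ks arbitrary: j) (simp_all add: s_op_xvar)

definition omega_index :: "nat \<Rightarrow> nat \<Rightarrow> nat" where
  "omega_index n j = (if j = 1 then n else if 1 < j \<and> j \<le> n then j - 1 else j)"

text \<open>Stated with Suc 0 rather than 1, which is the form [1..<n] takes under simp.\<close>

lemma fold_transpose_upt: "0 < n \<Longrightarrow> fold (\<lambda>k. transpose k (Suc k)) [Suc 0..<n] j = omega_index n j"
proof (induction n rule: nat_induct_non_zero)
  case (Suc n)
  then show ?case
    by (auto simp: omega_index_def transpose_def)
qed (simp add: omega_index_def)

interpretation omega_op: lp_endo "omega_op n" for n
proof -
  have "omega_op n = (\<lambda>f. fold s_op [1..<n] (tau_op 1 f))"
    by (simp add: fun_eq_iff omega_op_def)
  then show "lp_endo (omega_op n)"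
    using lp_endo_comp[OF lp_endo_fold[OF lp_endo_s_op] lp_endo_tau_op] by simp
qed

lemma omega_op_xvar: "1 < j \<Longrightarrow> j \<le> n \<Longrightarrow> omega_op n (xvar j) = xvar (j - 1)"
  by (simp add: omega_op_def tau_op_xvar fold_s_op_xvar fold_transpose_upt omega_index_def)

lemma omega_op_s_op:
  assumes "1 \<le> k" "k + 2 \<le> n"
  shows "omega_op n (s_op (Suc k) f) = s_op k (omega_op n f)"
proof (rule poly_mapping_eqI)
  fix m
  let ?P = "foldr swap_exp [1..<n]"
  have "omega_index n (transpose (Suc k) (Suc (Suc k)) j)
      = transpose k (Suc k) (omega_index n j)" for j
    using assms by (auto simp: omega_index_def transpose_def)
  then have "swap_exp (Suc k) (?P m) = ?P (swap_exp k m)"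
    using assms by (intro poly_mapping_eqI)
      (simp add: lookup_swap_exp lookup_foldr_swap_exp fold_transpose_upt)
  moreover have "Poly_Mapping.lookup (?P (swap_exp k m)) 1 = Poly_Mapping.lookup (?P m) 1"
    using assms by (simp add: lookup_foldr_swap_exp lookup_swap_exp fold_transpose_upt
        omega_index_def transpose_def)
  ultimately show "Poly_Mapping.lookup (omega_op n (s_op (Suc k) f)) m
      = Poly_Mapping.lookup (s_op k (omega_op n f)) m"
    by (simp add: omega_op_def lookup_fold_s_op lookup_tau_op lookup_s_op)
qed

lemma omega_op_T_op:
  assumes "1 \<le> k" "k + 2 \<le> n"
  shows "omega_op n (T_op (Suc k) f) = T_op k (omega_op n f)"
  using assms by (intro omega_op.T_op_transport) (simp_all add: omega_op_xvar omega_op_s_op)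

section \<open>The q-Dunkl operators\<close>

interpretation foldr_Tinv_op: lp_linear "foldr Tinv_op ks" for ks
  by (intro lp_linear_foldr Tinv_op.lp_linear_axioms)

lemma Tij_inv_Suc: "Tij_inv i (Suc i) g = Tinv_op i g"
  by (simp add: Tij_inv_def)

lemma Tij_inv_step:
  assumes "Suc i < j"
  shows "Tij_inv i j g = Tinv_op i (Tij_inv (Suc i) j (Tinv_op i g))"
proof -
  have "[i..<j] = i # [Suc i..<j]" "[i..<j - 1] = i # [Suc i..<j - 1]"
    using assms by (simp_all add: upt_conv_Cons)
  then show ?thesis
    by (simp add: Tij_inv_def)
qed

definition dunkl_sum :: "nat \<Rightarrow> nat \<Rightarrow> lp \<Rightarrow> lp" where
  "dunkl_sum n i g = (\<Sum>j = i + 1..n. const (tt ^ (j - i)) * Tij_inv i j g)"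

definition B_op :: "nat \<Rightarrow> nat \<Rightarrow> lp \<Rightarrow> lp" where
  "B_op n i g = g + const (inverse tt - 1) * dunkl_sum n i g"

lemma D_op_B_op: "D_op n i f = xinv i * (f - const (tt ^ (n - 1)) * B_op n i (Y_op n i f))"
  by (simp add: D_op_def B_op_def dunkl_sum_def)

lemma dunkl_sum_step:
  assumes "i < n"
  shows "dunkl_sum n i g = const tt * Tinv_op i (g + dunkl_sum n (Suc i) (Tinv_op i g))"
proof -
  have "{i + 1..n} = insert (Suc i) {Suc (Suc i)..n}"
    using assms by auto
  then have "dunkl_sum n i g
      = const tt * Tinv_op i g + (\<Sum>j = Suc (Suc i)..n. const (tt ^ (j - i)) * Tij_inv i j g)"
    by (simp add: dunkl_sum_def Tij_inv_Suc)
  also have "(\<Sum>j = Suc (Suc i)..n. const (tt ^ (j - i)) * Tij_inv i j g)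
      = (\<Sum>j = Suc (Suc i)..n.
          const tt * Tinv_op i (const (tt ^ (j - Suc i)) * Tij_inv (Suc i) j (Tinv_op i g)))"
  proof (rule sum.cong)
    fix j
    assume "j \<in> {Suc (Suc i)..n}"
    then have "Suc i < j" "tt ^ (j - i) = tt * tt ^ (j - Suc i)"
      by (auto simp: power_Suc[symmetric] Suc_diff_Suc simp del: power_Suc)
    then show "const (tt ^ (j - i)) * Tij_inv i j g
        = const tt * Tinv_op i (const (tt ^ (j - Suc i)) * Tij_inv (Suc i) j (Tinv_op i g))"
      by (simp add: Tij_inv_step Tinv_op.map_const_mult const_mult mult.assoc)
  qed simp
  finally show ?thesis
    by (simp add: dunkl_sum_def Tinv_op.map_add Tinv_op.map_sum sum_distrib_left distrib_left)
qed

lemma B_op_const_mult: "B_op n i (const c * g) = const c * B_op n i g"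
proof -
  have "Tij_inv i j (const c * g) = const c * Tij_inv i j g" for j
    by (simp add: Tij_inv_def foldr_Tinv_op.map_const_mult)
  then have "dunkl_sum n i (const c * g) = const c * dunkl_sum n i g"
    by (simp add: dunkl_sum_def sum_distrib_left mult.left_commute)
  then show ?thesis
    by (simp add: B_op_def algebra_simps)
qed

lemma B_op_T_op:
  assumes "i < n"
  shows "B_op n i (T_op i h) = const tt * Tinv_op i (B_op n (Suc i) h)"
proof -
  have "(inverse tt - 1) * tt = 1 - tt"
    using tt_nonzero by (simp add: field_simps)
  then have inv: "const (inverse tt - 1) * const tt = const (1 - tt)"
    by (simp flip: const_mult)
  let ?S = "Tinv_op i (dunkl_sum n (Suc i) h)"
  have "B_op n i (T_op i h) = const (1 - tt) * h + T_op i h + const (1 - tt) * ?S"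
    by (simp add: B_op_def dunkl_sum_step[OF assms] Tinv_op.map_add algebra_simps flip: inv)
  also have "\<dots> = const tt * Tinv_op i h + (const (inverse tt - 1) * const tt) * ?S"
    by (simp only: tt_Tinv_op inv)
  also have "\<dots> = const tt * Tinv_op i (B_op n (Suc i) h)"
    by (simp only: B_op_def Tinv_op.map_add Tinv_op.map_const_mult) (simp add: distrib_left mult_ac)
  finally show ?thesis .
qed

lemma Y_op_Tinv_op:
  assumes "1 \<le> i" "i < n"
  shows "Y_op n i (Tinv_op i f) = const (inverse tt) * T_op i (Y_op n (Suc i) f)"
proof -
  have "foldr Tinv_op [1..<Suc i] f = foldr Tinv_op [1..<i] (Tinv_op i f)"
    using assms by (simp add: upt_Suc_append)
  moreover have "[i..<n] = i # [Suc i..<n]"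
    using assms by (simp add: upt_conv_Cons)
  moreover have "inverse tt * tt powi (int (Suc i) - int n) = tt powi (int i - int n)"
  proof -
    have "int (Suc i) - int n = (int i - int n) + 1"
      by simp
    then have "tt powi (int (Suc i) - int n) = tt powi (int i - int n) * tt"
      by (simp only: power_int_add_1[OF disjI1[OF tt_nonzero]])
    then show ?thesis
      using tt_nonzero by simp
  qed
  ultimately show ?thesis
    by (simp add: Y_op_def T_op.map_const_mult const_mult_assoc)
qed

lemma T_op_D_op_Suc:
  assumes "1 \<le> i" "i < n"
  shows "T_op i (D_op n (Suc i) f) = const tt * D_op n i (Tinv_op i f)"
proof -
  have "B_op n i (Y_op n i (Tinv_op i f))
      = const (inverse tt) * (const tt * Tinv_op i (B_op n (Suc i) (Y_op n (Suc i) f)))"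
    by (simp only: Y_op_Tinv_op[OF assms] B_op_const_mult B_op_T_op[OF assms(2)])
  also have "\<dots> = Tinv_op i (B_op n (Suc i) (Y_op n (Suc i) f))"
    using tt_nonzero by (simp add: const_mult_assoc)
  finally show ?thesis
    by (simp add: D_op_B_op T_op_xinv_Suc Tinv_op.map_diff Tinv_op.map_const_mult)
qed

lemma T_op_D_op:
  assumes "1 \<le> i" "i < n"
  shows "T_op i (D_op n i f) = D_op n (Suc i) (T_op i f) + const (tt - 1) * D_op n i f"
proof -
  define h where "h = D_op n (Suc i) (T_op i f)"
  have "inverse tt * tt = 1"
    using tt_nonzero by simp
  moreover have "T_op i h = const tt * D_op n i f"
    using T_op_D_op_Suc[OF assms, of "T_op i f"] by (simp add: h_def)
  ultimately have D: "D_op n i f = const (inverse tt) * T_op i h"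
    by (simp add: const_mult_assoc)
  have "T_op i (D_op n i f) = const (inverse tt) * (const (tt - 1) * T_op i h + const tt * h)"
    by (simp add: D T_op.map_const_mult T_op_T_op)
  also have "\<dots> = h + const (tt - 1) * D_op n i f"
    using \<open>inverse tt * tt = 1\<close> by (simp add: D const_mult_assoc algebra_simps flip: const_mult)
  finally show ?thesis
    by (simp add: h_def)
qed

lemma T_op_Y_op_commute:
  assumes "1 \<le> i" "i < n" "1 \<le> j" "j \<le> n" "j \<noteq> i" "j \<noteq> Suc i"
  shows "T_op i (Y_op n j g) = Y_op n j (T_op i g)"
proof -
  have "T_op i (foldr T_op [j..<n] (omega_op n (foldr Tinv_op [1..<j] g)))
      = foldr T_op [j..<n] (omega_op n (foldr Tinv_op [1..<j] (T_op i g)))"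
  proof (cases "Suc i < j")
    case True
    have "[1..<j] = [1..<i] @ i # Suc i # [Suc (Suc i)..<j]"
      using assms True by (intro upt_split_pair) auto
    then have "T_op (Suc i) (foldr Tinv_op [1..<j] g) = foldr Tinv_op [1..<j] (T_op i g)"
      by (simp add: T_op_foldr_Tinv_op_far far_def T_op_Suc_Tinv_op_Tinv_op_Suc)
    moreover have "T_op i (omega_op n V) = omega_op n (T_op (Suc i) V)" for V
      using omega_op_T_op[of i n V] True assms by simp
    ultimately show ?thesis
      using True by (simp add: T_op_foldr_T_op_far far_def)
  next
    case False
    then obtain p where p: "i = Suc p" "j \<le> p" "1 \<le> p"
      using assms by (cases i) auto
    have "[j..<n] = [j..<p] @ p # Suc p # [Suc (Suc p)..<n]"
      using assms p by (intro upt_split_pair) auto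
    moreover have "T_op p (omega_op n V) = omega_op n (T_op (Suc p) V)" for V
      using omega_op_T_op[of p n V] assms p by simp
    ultimately show ?thesis
      using p by (simp add: T_op_foldr_T_op_far T_op_foldr_Tinv_op_far far_def flip: T_op_braid)
  qed
  then show ?thesis
    by (simp add: Y_op_def T_op.map_const_mult)
qed

lemma T_op_Tij_inv_commute:
  assumes "j \<noteq> i" "j \<noteq> Suc i" "k \<noteq> i" "k \<noteq> Suc i"
  shows "T_op i (Tij_inv j k g) = Tij_inv j k (T_op i g)"
proof -
  have "Suc i < j \<or> j < i \<and> k < i \<or> j < i \<and> Suc i < k"
    using assms by linarith
  then consider "Suc i < j" | "j < i" "k < i" | "j < i" "Suc i < k"
    by blast
  then show ?thesis
  proof cases
    case 1
    then show ?thesis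
      unfolding Tij_inv_def by (intro T_op_foldr_Tinv_op_far) (auto simp: far_def)
  next
    case 2
    then show ?thesis
      unfolding Tij_inv_def by (intro T_op_foldr_Tinv_op_far) (auto simp: far_def)
  next
    case 3
    then obtain p where "i = Suc p" "j \<le> p" "Suc (Suc p) < k"
      by (cases i) auto
    then have "[j..<k] = [j..<p] @ p # Suc p # [Suc (Suc p)..<k]"
      "[j..<k - 1] = [j..<p] @ p # Suc p # [Suc (Suc p)..<k - 1]"
      by (simp_all add: upt_split_pair)
    then show ?thesis
      using \<open>i = Suc p\<close> by (simp add: Tij_inv_def T_op_foldr_Tinv_op_far far_def
          T_op_Suc_Tinv_op_Tinv_op_Suc T_op_Tinv_op_Suc_Tinv_op)
  qed
qed

lemma T_op_Tinv_op_pair: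
  "T_op (Suc p) (Tinv_op p V) + const tt * T_op (Suc p) (Tinv_op p (Tinv_op (Suc p) (Tinv_op p V)))
    = Tinv_op p (T_op (Suc p) V)
      + const tt * Tinv_op p (Tinv_op (Suc p) (Tinv_op p (T_op (Suc p) V)))"
proof -
  have "T_op (Suc p) (Tinv_op p (Tinv_op (Suc p) (Tinv_op p V))) = Tinv_op p (Tinv_op (Suc p) V)"
    by (simp only: T_op_Suc_Tinv_op_Tinv_op_Suc T_op_Tinv_op)
  moreover have "Tinv_op p (Tinv_op (Suc p) (Tinv_op p (T_op (Suc p) V)))
      = Tinv_op (Suc p) (Tinv_op p V)"
    by (simp only: Tinv_op_braid Tinv_op_T_op)
  moreover have "const tt * Tinv_op p (Tinv_op (Suc p) V)
      = Tinv_op p (const tt * Tinv_op (Suc p) V)"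
    by (simp add: Tinv_op.map_const_mult)
  then have "const tt * Tinv_op p (Tinv_op (Suc p) V)
      = const (1 - tt) * Tinv_op p V + Tinv_op p (T_op (Suc p) V)"
    by (simp only: tt_Tinv_op Tinv_op.map_add Tinv_op.map_const_mult)
  moreover have "const tt * Tinv_op (Suc p) (Tinv_op p V)
      = const (1 - tt) * Tinv_op p V + T_op (Suc p) (Tinv_op p V)"
    by (rule tt_Tinv_op)
  ultimately show ?thesis
    by (simp add: algebra_simps)
qed

lemma T_op_Tij_inv_pair:
  assumes "j < i"
  shows "T_op i (Tij_inv j i g) + const tt * T_op i (Tij_inv j (Suc i) g)
    = Tij_inv j i (T_op i g) + const tt * Tij_inv j (Suc i) (T_op i g)"
proof -
  obtain p where p: "i = Suc p" "j \<le> p"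
    using assms by (cases i) auto
  let ?P = "foldr Tinv_op [j..<p]" and ?P' = "foldr Tinv_op (rev [j..<p])"
  have Tij: "Tij_inv j (Suc p) h = ?P (Tinv_op p (?P' h))"
    "Tij_inv j (Suc (Suc p)) h = ?P (Tinv_op p (Tinv_op (Suc p) (Tinv_op p (?P' h))))" for h
    using p by (simp_all add: Tij_inv_def)
  have far: "T_op (Suc p) (?P h) = ?P (T_op (Suc p) h)"
    "T_op (Suc p) (?P' h) = ?P' (T_op (Suc p) h)" for h
    by (auto intro!: T_op_foldr_Tinv_op_far simp: far_def)
  show ?thesis
    using arg_cong[OF T_op_Tinv_op_pair[of p "?P' g"], of ?P]
    by (simp add: p Tij far foldr_Tinv_op.map_add foldr_Tinv_op.map_const_mult)
qed

lemma T_op_dunkl_sum_commute: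
  assumes "i < n" "j \<noteq> i" "j \<noteq> Suc i"
  shows "T_op i (dunkl_sum n j g) = dunkl_sum n j (T_op i g)"
proof (cases "Suc i < j")
  case True
  then show ?thesis
    by (simp add: dunkl_sum_def T_op.map_sum T_op.map_const_mult T_op_Tij_inv_commute)
next
  case False
  then have "j < i"
    using assms by simp
  have "tt ^ (Suc i - j) = tt ^ (i - j) * tt"
    using \<open>j < i\<close> by (simp add: Suc_diff_le)
  then have "const (tt ^ (i - j)) * T_op i (Tij_inv j i g)
        + const (tt ^ (Suc i - j)) * T_op i (Tij_inv j (Suc i) g)
      = const (tt ^ (i - j)) * Tij_inv j i (T_op i g)
        + const (tt ^ (Suc i - j)) * Tij_inv j (Suc i) (T_op i g)"
    using arg_cong[OF T_op_Tij_inv_pair[OF \<open>j < i\<close>, of g], of "\<lambda>h. const (tt ^ (i - j)) * h"]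
    by (simp add: const_mult distrib_left mult.assoc)
  then show ?thesis
    unfolding dunkl_sum_def T_op.map_sum T_op.map_const_mult
    using assms \<open>j < i\<close>
    by (intro sum_cong_pair[where a = i and b = "Suc i"]) (auto simp: T_op_Tij_inv_commute)
qed

lemma T_op_D_op_commute:
  assumes "1 \<le> i" "i < n" "1 \<le> j" "j \<le> n" "j \<noteq> i" "j \<noteq> Suc i"
  shows "T_op i (D_op n j f) = D_op n j (T_op i f)"
  using assms
  by (simp add: D_op_B_op B_op_def T_op_xinv_other T_op.map_diff T_op.map_add T_op.map_const_mult
      T_op_Y_op_commute T_op_dunkl_sum_commute)

theorem lemma3p1:
  fixes n :: nat
  assumes "n \<ge> 2"
  shows "\<forall>f \<in> laurent_in n. \<forall>i \<in> {1..n - 1}.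
           T_op i (D_op n (i + 1) f) = const tt * D_op n i (Tinv_op i f)
         \<and> T_op i (D_op n i f) = D_op n (i + 1) (T_op i f) + const (tt - 1) * D_op n i f
         \<and> (\<forall>j \<in> {1..n}. j \<noteq> i \<longrightarrow> j \<noteq> i + 1 \<longrightarrow> T_op i (D_op n j f) = D_op n j (T_op i f))"
proof (intro ballI conjI impI)
  fix f i
  assume "i \<in> {1..n - 1}"
  then have i: "1 \<le> i" "i < n"
    using assms by auto
  show "T_op i (D_op n (i + 1) f) = const tt * D_op n i (Tinv_op i f)"
    using T_op_D_op_Suc[OF i] by simp
  show "T_op i (D_op n i f) = D_op n (i + 1) (T_op i f) + const (tt - 1) * D_op n i f"
    using T_op_D_op[OF i] by simp
  fix j
  assume "j \<in> {1..n}" "j \<noteq> i" "j \<noteq> i + 1"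
  then show "T_op i (D_op n j f) = D_op n j (T_op i f)"
    using T_op_D_op_commute[OF i] by simp
qed

end
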